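(* Let $f,g\in\mathbb L^2([0,1])$, let $X$ be distributed according to the model below, and set $\Delta=\|f-g\|$. Then for all $0<\epsilon\le1/8$, \[ \mathbb P_X\Big(\big|\eta(X)-\tfrac12\big|\le\epsilon\Big)\le 1\wedge\frac{10\epsilon}{\Delta}. \]
   Context: Model: $Y\sim\mathrm{Bernoulli}(1/2)$ independent of a standard Brownian motion $W$ on $[0,1]$, and $dX(t)=Yf(t)\,dt+(1-Y)g(t)\,dt+dW(t)$, $t\in[0,1]$. $\mathbb P_X$ is the law of $X$. The regression function is $\eta(X)=\mathbb P(Y=1\mid X)=\dfrac{\exp(\int_0^1(f-g)(s)\,dX_s-\frac12\|f\|^2+\frac12\|g\|^2)}{1+\exp(\int_0^1(f-g)(s)\,dX_s-\frac12\|f\|^2+\frac12\|g\|^2)}$. $\|\cdot\|$ is the $\mathbb L^2([0,1])$ norm, $a\wedge b=\min\{a,b\}$, and $10\epsilon/\Delta=+\infty$ if $\Delta=0$. *)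

theory Defs
  imports "HOL-Probability.Probability"
begin

definition sq_integrable01 :: "(real \<Rightarrow> real) \<Rightarrow> bool" where
  "sq_integrable01 h \<longleftrightarrow> h \<in> borel_measurable lborel \<and>
     set_integrable lborel {0..1} (\<lambda>t. (h t)^2)"

definition norm01 :: "(real \<Rightarrow> real) \<Rightarrow> real" where
  "norm01 h = sqrt (LINT t:{0..1}|lborel. (h t)^2)"

definition partition01 :: "nat \<Rightarrow> (nat \<Rightarrow> real) \<Rightarrow> bool" where
  "partition01 N \<tau> \<longleftrightarrow> 0 < N \<and> \<tau> 0 = 0 \<and> \<tau> N = 1 \<and> (\<forall>i<N. \<tau> i < \<tau> (Suc i))"

definition step_fun :: "nat \<Rightarrow> (nat \<Rightarrow> real) \<Rightarrow> (nat \<Rightarrow> real) \<Rightarrow> real \<Rightarrow> real" where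
  "step_fun N \<tau> c t = (\<Sum>i<N. c i * indicator {\<tau> i..<\<tau> (Suc i)} t)"

definition step_sum :: "(real \<Rightarrow> 'a \<Rightarrow> real) \<Rightarrow> nat \<Rightarrow> (nat \<Rightarrow> real) \<Rightarrow> (nat \<Rightarrow> real) \<Rightarrow> 'a \<Rightarrow> real" where
  "step_sum X N \<tau> c \<omega> = (\<Sum>i<N. c i * (X (\<tau> (Suc i)) \<omega> - X (\<tau> i) \<omega>))"

(* I is (a version of) the Wiener integral  int_0^1 h(s) dX_s  for deterministic h in L^2:
   the limit in probability of the elementary integrals of step functions converging to h in L^2 *)
definition stoch_integral :: "'a measure \<Rightarrow> (real \<Rightarrow> 'a \<Rightarrow> real) \<Rightarrow> (real \<Rightarrow> real) \<Rightarrow> ('a \<Rightarrow> real) \<Rightarrow> bool" where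
  "stoch_integral M X h I \<longleftrightarrow> I \<in> borel_measurable M \<and>
     (\<exists>Ns \<tau>s cs. (\<forall>n. partition01 (Ns n) (\<tau>s n)) \<and>
        (\<lambda>n. LINT t:{0..1}|lborel. (step_fun (Ns n) (\<tau>s n) (cs n) t - h t)^2) \<longlonglongrightarrow> 0 \<and>
        (\<forall>e>0. (\<lambda>n. measure M {\<omega> \<in> space M. \<bar>step_sum X (Ns n) (\<tau>s n) (cs n) \<omega> - I \<omega>\<bar> > e})
                  \<longlonglongrightarrow> 0))"

definition std_BM :: "'a measure \<Rightarrow> (real \<Rightarrow> 'a \<Rightarrow> real) \<Rightarrow> bool" where
  "std_BM M W \<longleftrightarrow> prob_space M \<and>
     (\<forall>\<omega>\<in>space M. W 0 \<omega> = 0 \<and> continuous_on {0..1} (\<lambda>t. W t \<omega>)) \<and>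
     (\<forall>s t. 0 \<le> s \<longrightarrow> s < t \<longrightarrow> t \<le> 1 \<longrightarrow>
        distributed M lborel (\<lambda>\<omega>. W t \<omega> - W s \<omega>) (normal_density 0 (sqrt (t - s)))) \<and>
     (\<forall>n \<tau>. (\<forall>i<n. 0 \<le> \<tau> i \<and> \<tau> i < \<tau> (Suc i) \<and> \<tau> (Suc i) \<le> 1) \<longrightarrow>
        prob_space.indep_vars M (\<lambda>_. borel) (\<lambda>i \<omega>. W (\<tau> (Suc i)) \<omega> - W (\<tau> i) \<omega>) {..<n})"

(* the random variable Y is independent of the process W = (W t) on [0,1]
   (independence of the generated sigma-algebras; same content as prob_space.indep_var,
    which however requires both variables to have the same codomain type) *)
definition indep_rv_process :: "'a measure \<Rightarrow> ('a \<Rightarrow> real) \<Rightarrow> (real \<Rightarrow> 'a \<Rightarrow> real) \<Rightarrow> bool" where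
  "indep_rv_process M Y W \<longleftrightarrow>
     Y \<in> borel_measurable M \<and>
     (\<lambda>\<omega>. \<lambda>t\<in>{0..1}. W t \<omega>) \<in> measurable M (Pi\<^sub>M {0..1} (\<lambda>_. borel)) \<and>
     prob_space.indep_set M
       (sigma_sets (space M) {Y -` A \<inter> space M | A. A \<in> sets borel})
       (sigma_sets (space M) {(\<lambda>\<omega>. \<lambda>t\<in>{0..1}. W t \<omega>) -` B \<inter> space M | B. B \<in> sets (Pi\<^sub>M {0..1} (\<lambda>_. borel))})"

(* regression function eta(X), given I = int_0^1 (f-g)(s) dX_s *)
definition eta :: "(real \<Rightarrow> real) \<Rightarrow> (real \<Rightarrow> real) \<Rightarrow> ('a \<Rightarrow> real) \<Rightarrow> 'a \<Rightarrow> real" where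
  "eta f g I \<omega> = (let z = I \<omega> - (norm01 f)^2 / 2 + (norm01 g)^2 / 2 in exp z / (1 + exp z))"

end

(* Approximate the Wiener integral I by elementary integrals of step functions s_n.
   Along s_n the integral of dX splits as Y A + (1 - Y) B + G with deterministic A, B and a
   centred Gaussian G of standard deviation ||s_n||.  If |eta - 1/2| <= epsilon, the logit I + k
   of eta lies within 6 epsilon of 0, so outside the event where the approximation error exceeds
   epsilon/4 the variable G falls into one of two windows of length 25 epsilon/2, one per class;
   each has Gaussian probability at most 5 epsilon/||s_n||.  Then let n tend to infinity, so that
   ||s_n|| tends to Delta. *)

theory Submission
  imports Defs
begin

lemma partition01_mono:
  assumes "partition01 N \<tau>" "i \<le> j" "j \<le> N"
  shows "\<tau> i \<le> \<tau> j"
proof (rule lift_Suc_mono_le_ivl[where N = "{..<N}"])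
  show "\<tau> n \<le> \<tau> (Suc n)" if "n \<in> {..<N}" for n
    using assms(1) that by (simp add: partition01_def less_imp_le)
qed (use assms in auto)

lemma partition01_range:
  assumes "partition01 N \<tau>" "i \<le> N"
  shows "\<tau> i \<in> {0..1}"
  using partition01_mono[OF assms(1), of 0 i] partition01_mono[OF assms(1), of i N] assms
  by (auto simp: partition01_def)

lemma partition01_cells_disjoint:
  assumes "partition01 N \<tau>" "i < N" "j < N"
    and "t \<in> {\<tau> i..<\<tau> (Suc i)}" "t \<in> {\<tau> j..<\<tau> (Suc j)}"
  shows "i = j"
proof (rule linorder_cases[of i j])
  assume "i < j"
  then have "\<tau> (Suc i) \<le> \<tau> j" using partition01_mono[OF assms(1), of "Suc i" j] assms by auto
  then show ?thesis using assms by auto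
next
  assume "j < i"
  then have "\<tau> (Suc j) \<le> \<tau> i" using partition01_mono[OF assms(1), of "Suc j" i] assms by auto
  then show ?thesis using assms by auto
qed

lemma step_fun_cell:
  assumes "partition01 N \<tau>" "i < N" "t \<in> {\<tau> i..<\<tau> (Suc i)}"
  shows "step_fun N \<tau> c t = c i"
proof -
  have "step_fun N \<tau> c t = (\<Sum>j\<in>{i}. c j * indicator {\<tau> j..<\<tau> (Suc j)} t)"
    unfolding step_fun_def using partition01_cells_disjoint[OF assms(1) _ assms(2) _ assms(3)]
    by (intro sum.mono_neutral_right) (auto simp: indicator_def assms(2))
  also have "\<dots> = c i"
    using assms(3) by simp
  finally show ?thesis .
qed

lemma step_fun_power2:
  assumes "partition01 N \<tau>"
  shows "(step_fun N \<tau> c t)\<^sup>2 = step_fun N \<tau> (\<lambda>i. (c i)\<^sup>2) t"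
proof (cases "\<exists>i<N. t \<in> {\<tau> i..<\<tau> (Suc i)}")
  case True
  then show ?thesis using step_fun_cell[OF assms] by auto
next
  case False
  then have "indicator {\<tau> i..<\<tau> (Suc i)} t = (0::real)" if "i < N" for i
    using that by (auto simp: indicator_def)
  then show ?thesis by (simp add: step_fun_def)
qed

lemma set_integral_step_fun:
  assumes "partition01 N \<tau>"
  shows "set_integrable lborel {0..1} (step_fun N \<tau> c)"
    and "(LINT t:{0..1}|lborel. step_fun N \<tau> c t) = (\<Sum>i<N. c i * (\<tau> (Suc i) - \<tau> i))"
proof -
  have cell_le: "\<tau> i \<le> \<tau> (Suc i)" if "i < N" for i
    using assms that by (auto simp: partition01_def less_imp_le)
  have cell_sub: "{\<tau> i..<\<tau> (Suc i)} \<subseteq> {0..1}" if "i < N" for i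
    using partition01_range[OF assms, of i] partition01_range[OF assms, of "Suc i"] that by auto
  have restrict: "(\<lambda>t. indicator {0..1} t *\<^sub>R step_fun N \<tau> c t) = step_fun N \<tau> c"
  proof
    fix t
    have "indicator {\<tau> i..<\<tau> (Suc i)} t = (0::real)" if "t \<notin> {0..1}" "i < N" for i
      using cell_sub[of i] that by (auto simp: indicator_def)
    then show "indicator {0..1} t *\<^sub>R step_fun N \<tau> c t = step_fun N \<tau> c t"
      by (cases "t \<in> {0..1}") (simp_all add: step_fun_def)
  qed
  have integrable: "integrable lborel (step_fun N \<tau> c)"
    unfolding step_fun_def
    by (intro Bochner_Integration.integrable_sum integrable_mult_right integrable_real_indicator) (auto simp: cell_le)
  then show "set_integrable lborel {0..1} (step_fun N \<tau> c)"
    unfolding set_integrable_def restrict .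
  show "(LINT t:{0..1}|lborel. step_fun N \<tau> c t) = (\<Sum>i<N. c i * (\<tau> (Suc i) - \<tau> i))"
    unfolding set_lebesgue_integral_def restrict unfolding step_fun_def
  proof (subst Bochner_Integration.integral_sum)
    show "integrable lborel (\<lambda>t. c i * indicator {\<tau> i..<\<tau> (Suc i)} t)" if "i \<in> {..<N}" for i
      using that cell_le by (intro integrable_mult_right integrable_real_indicator) auto
    show "(\<Sum>i<N. LINT t|lborel. c i * indicator {\<tau> i..<\<tau> (Suc i)} t) = (\<Sum>i<N. c i * (\<tau> (Suc i) - \<tau> i))"
      using cell_le by (intro sum.cong refl) simp
  qed
qed

lemma norm01_step_fun:
  assumes "partition01 N \<tau>"
  shows "norm01 (step_fun N \<tau> c) = sqrt (\<Sum>i<N. (c i)\<^sup>2 * (\<tau> (Suc i) - \<tau> i))"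
  unfolding norm01_def step_fun_power2[OF assms] by (simp add: set_integral_step_fun[OF assms])

lemma sq_integrable01_step_fun:
  assumes "partition01 N \<tau>"
  shows "sq_integrable01 (step_fun N \<tau> c)"
proof -
  have "step_fun N \<tau> c \<in> borel_measurable lborel"
    unfolding step_fun_def by measurable
  then show ?thesis
    unfolding sq_integrable01_def step_fun_power2[OF assms] by (simp add: set_integral_step_fun[OF assms])
qed

lemma sq_integrable01_add:
  assumes "sq_integrable01 a" "sq_integrable01 b"
  shows "sq_integrable01 (\<lambda>t. a t + b t)"
proof -
  have [measurable]: "a \<in> borel_measurable lborel" "b \<in> borel_measurable lborel"
    and ia: "set_integrable lborel {0..1} (\<lambda>t. (a t)\<^sup>2)"
    and ib: "set_integrable lborel {0..1} (\<lambda>t. (b t)\<^sup>2)"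
    using assms by (auto simp: sq_integrable01_def)
  have "set_integrable lborel {0..1} (\<lambda>t. (a t + b t)\<^sup>2)"
  proof (rule set_integrable_bound[where f = "\<lambda>t. 2 * (a t)\<^sup>2 + 2 * (b t)\<^sup>2"])
    show "set_integrable lborel {0..1} (\<lambda>t. 2 * (a t)\<^sup>2 + 2 * (b t)\<^sup>2)"
      using ia ib by (intro set_integral_add set_integrable_mult_right) auto
    show "set_borel_measurable lborel {0..1} (\<lambda>t. (a t + b t)\<^sup>2)"
      unfolding set_borel_measurable_def by measurable
    have "(x + y)\<^sup>2 \<le> 2 * x\<^sup>2 + 2 * y\<^sup>2" for x y :: real
      using sum_squares_ge_zero[of "x - y" 0] by (simp add: power2_eq_square algebra_simps)
    then show "AE t in lborel. t \<in> {0..1} \<longrightarrow> norm ((a t + b t)\<^sup>2) \<le> norm (2 * (a t)\<^sup>2 + 2 * (b t)\<^sup>2)"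
      by auto
  qed
  then show ?thesis
    unfolding sq_integrable01_def by simp
qed

lemma sq_integrable01_diff:
  assumes "sq_integrable01 a" "sq_integrable01 b"
  shows "sq_integrable01 (\<lambda>t. a t - b t)"
  using sq_integrable01_add[OF assms(1), of "\<lambda>t. - b t"] assms(2)
  by (simp add: sq_integrable01_def)

lemma norm01_power2: "(norm01 a)\<^sup>2 = (LINT t:{0..1}|lborel. (a t)\<^sup>2)"
  unfolding norm01_def set_lebesgue_integral_def by (simp add: integral_nonneg)

lemma norm01_nonneg: "0 \<le> norm01 a"
  unfolding norm01_def set_lebesgue_integral_def by (simp add: integral_nonneg)

lemma le_sum_power2_if_weighted_bounds:
  fixes x A B :: real
  assumes "0 \<le> A" "0 \<le> B" and bound: "\<And>t. 0 < t \<Longrightarrow> x \<le> (1 + t) * A\<^sup>2 + (1 + 1 / t) * B\<^sup>2"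
  shows "x \<le> (A + B)\<^sup>2"
proof (rule field_le_epsilon)
  fix e :: real
  assume "0 < e"
  define \<eta> where "\<eta> = e / (A + B + 1)"
  have \<eta>: "0 < \<eta>" "\<eta> * (A + B) \<le> e"
    using \<open>0 < e\<close> assms(1,2) by (auto simp: \<eta>_def field_simps)
  \<comment> \<open>The optimal weight B / A, perturbed so that A = 0 or B = 0 need no separate treatment.\<close>
  define t where "t = (B + \<eta>) / (A + \<eta>)"
  have "0 < t" using \<eta> assms(1,2) by (simp add: t_def)
  have "t * A\<^sup>2 \<le> (B + \<eta>) * A"
    using \<eta> assms(1,2) by (simp add: t_def field_simps power2_eq_square mult_left_mono)
  moreover have "B\<^sup>2 / t \<le> B * (A + \<eta>)"
    using \<eta> assms(1,2) by (simp add: t_def field_simps power2_eq_square mult_left_mono)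
  ultimately have "(1 + t) * A\<^sup>2 + (1 + 1 / t) * B\<^sup>2 \<le> (A + B)\<^sup>2 + \<eta> * (A + B)"
    by (simp add: algebra_simps power2_eq_square)
  then show "x \<le> (A + B)\<^sup>2 + e"
    using bound[OF \<open>0 < t\<close>] \<eta>(2) by linarith
qed

lemma norm01_triangle:
  assumes "sq_integrable01 a" "sq_integrable01 b"
  shows "norm01 (\<lambda>t. a t + b t) \<le> norm01 a + norm01 b"
proof -
  have ia: "set_integrable lborel {0..1} (\<lambda>t. (a t)\<^sup>2)"
    and ib: "set_integrable lborel {0..1} (\<lambda>t. (b t)\<^sup>2)"
    and iab: "set_integrable lborel {0..1} (\<lambda>t. (a t + b t)\<^sup>2)"
    using assms sq_integrable01_add[OF assms] by (auto simp: sq_integrable01_def)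
  have "(norm01 (\<lambda>t. a t + b t))\<^sup>2 \<le> (norm01 a + norm01 b)\<^sup>2"
  proof (rule le_sum_power2_if_weighted_bounds[OF norm01_nonneg norm01_nonneg])
    fix t :: real
    assume "0 < t"
    have pointwise: "(x + y)\<^sup>2 \<le> (1 + t) * x\<^sup>2 + (1 + 1 / t) * y\<^sup>2" for x y :: real
    proof -
      have "0 \<le> (t * x - y)\<^sup>2 / t" using \<open>0 < t\<close> by simp
      also have "\<dots> = (1 + t) * x\<^sup>2 + (1 + 1 / t) * y\<^sup>2 - (x + y)\<^sup>2"
        using \<open>0 < t\<close> by (simp add: field_simps power2_eq_square)
      finally show ?thesis by simp
    qed
    have "(LINT s:{0..1}|lborel. (a s + b s)\<^sup>2)
        \<le> (LINT s:{0..1}|lborel. (1 + t) * (a s)\<^sup>2 + (1 + 1 / t) * (b s)\<^sup>2)"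
      using ia ib by (intro set_integral_mono[OF iab] pointwise) auto
    also have "\<dots> = (1 + t) * (norm01 a)\<^sup>2 + (1 + 1 / t) * (norm01 b)\<^sup>2"
      using ia ib unfolding norm01_power2 by (subst set_integral_add(2)) auto
    finally show "(norm01 (\<lambda>t. a t + b t))\<^sup>2 \<le> (1 + t) * (norm01 a)\<^sup>2 + (1 + 1 / t) * (norm01 b)\<^sup>2"
      by (simp add: norm01_power2)
  qed
  then show ?thesis
    by (rule power2_le_imp_le) (simp add: norm01_nonneg)
qed

lemma norm01_diff_abs_le:
  assumes "sq_integrable01 a" "sq_integrable01 b"
  shows "\<bar>norm01 a - norm01 b\<bar> \<le> norm01 (\<lambda>t. a t - b t)"
proof -
  have "norm01 a \<le> norm01 b + norm01 (\<lambda>t. a t - b t)"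
    using norm01_triangle[OF assms(2) sq_integrable01_diff[OF assms]] by simp
  moreover have "norm01 b \<le> norm01 a + norm01 (\<lambda>t. b t - a t)"
    using norm01_triangle[OF assms(1) sq_integrable01_diff[OF assms(2,1)]] by simp
  moreover have "norm01 (\<lambda>t. b t - a t) = norm01 (\<lambda>t. a t - b t)"
    by (simp add: norm01_def power2_commute)
  ultimately show ?thesis by linarith
qed

lemma prob_normal_near_le:
  assumes "prob_space M" and G: "distributed M lborel G (normal_density \<mu> \<sigma>)"
    and "0 < \<sigma>" "0 \<le> r"
  shows "measure M {\<omega> \<in> space M. \<bar>G \<omega> - m\<bar> \<le> r} \<le> 2 * r / (\<sigma> * sqrt (2 * pi))"
proof -
  interpret prob_space M by (rule assms(1))
  define C where "C = 1 / (\<sigma> * sqrt (2 * pi))"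
  have "0 \<le> C" using \<open>0 < \<sigma>\<close> by (simp add: C_def)
  have density_le: "normal_density \<mu> \<sigma> x \<le> C" for x
  proof -
    have "sqrt (2 * pi * \<sigma>\<^sup>2) = \<sigma> * sqrt (2 * pi)"
      using \<open>0 < \<sigma>\<close> by (simp add: real_sqrt_mult)
    then have "normal_density \<mu> \<sigma> x = C * exp (- (x - \<mu>)\<^sup>2 / (2 * \<sigma>\<^sup>2))"
      by (simp add: normal_density_def C_def)
    also have "\<dots> \<le> C * 1" using \<open>0 \<le> C\<close> by (intro mult_left_mono) auto
    finally show ?thesis by simp
  qed
  have event: "{\<omega> \<in> space M. \<bar>G \<omega> - m\<bar> \<le> r} = G -` {m - r..m + r} \<inter> space M"
    by auto
  have "emeasure M {\<omega> \<in> space M. \<bar>G \<omega> - m\<bar> \<le> r}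
      = (\<integral>\<^sup>+x. ennreal (normal_density \<mu> \<sigma> x) * indicator {m - r..m + r} x \<partial>lborel)"
    unfolding event by (rule distributed_emeasure[OF G]) simp
  also have "\<dots> \<le> (\<integral>\<^sup>+x. ennreal C * indicator {m - r..m + r} x \<partial>lborel)"
    by (intro nn_integral_mono mult_right_mono ennreal_leI) (auto simp: density_le)
  also have "\<dots> = ennreal (C * (2 * r))"
    using \<open>0 \<le> r\<close> \<open>0 \<le> C\<close> by (simp add: nn_integral_cmult_indicator ennreal_mult)
  finally have "measure M {\<omega> \<in> space M. \<bar>G \<omega> - m\<bar> \<le> r} \<le> C * (2 * r)"
    using \<open>0 \<le> r\<close> \<open>0 \<le> C\<close> by (simp add: emeasure_eq_measure ennreal_le_iff)
  then show ?thesis by (simp add: C_def)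
qed

lemma std_BM_step_sum_normal:
  assumes BM: "std_BM M W" and "partition01 N \<tau>" and pos: "0 < norm01 (step_fun N \<tau> c)"
  shows "distributed M lborel (step_sum W N \<tau> c) (normal_density 0 (norm01 (step_fun N \<tau> c)))"
proof -
  interpret prob_space M using BM by (simp add: std_BM_def)
  \<comment> \<open>Zero coefficients are dropped: \<open>sum_indep_normal\<close> needs positive standard deviations.\<close>
  define S where "S = {i. i < N \<and> c i \<noteq> 0}"
  define D where "D = (\<lambda>i \<omega>. W (\<tau> (Suc i)) \<omega> - W (\<tau> i) \<omega>)"
  have cell: "\<tau> i < \<tau> (Suc i)" "0 \<le> \<tau> i" "\<tau> (Suc i) \<le> 1" if "i < N" for i
    using assms(2) that partition01_range[OF assms(2), of i] partition01_range[OF assms(2), of "Suc i"]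
    by (auto simp: partition01_def)
  have "norm01 (step_fun N \<tau> c) = sqrt (\<Sum>i\<in>S. (c i)\<^sup>2 * (\<tau> (Suc i) - \<tau> i))"
    unfolding norm01_step_fun[OF assms(2)] S_def by (intro arg_cong[where f = sqrt] sum.mono_neutral_right) auto
  also have "\<dots> = sqrt (\<Sum>i\<in>S. (\<bar>c i\<bar> * sqrt (\<tau> (Suc i) - \<tau> i))\<^sup>2)"
    using cell by (intro arg_cong[where f = sqrt] sum.cong) (auto simp: S_def power_mult_distrib less_imp_le)
  finally have std: "norm01 (step_fun N \<tau> c) = sqrt (\<Sum>i\<in>S. (\<bar>c i\<bar> * sqrt (\<tau> (Suc i) - \<tau> i))\<^sup>2)" .
  have "S \<noteq> {}"
    using pos unfolding std by auto
  have "indep_vars (\<lambda>_. borel) D {..<N}"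
    using BM cell unfolding std_BM_def D_def by blast
  then have "indep_vars (\<lambda>_. borel) (\<lambda>i \<omega>. c i * D i \<omega>) S"
    by (intro indep_vars_subset[OF indep_vars_compose2[where Y = "\<lambda>i x. c i * x"]]) (auto simp: S_def)
  moreover have "distributed M lborel (\<lambda>\<omega>. c i * D i \<omega>) (normal_density 0 (\<bar>c i\<bar> * sqrt (\<tau> (Suc i) - \<tau> i)))"
    if "i \<in> S" for i
  proof -
    have "distributed M lborel (D i) (normal_density 0 (sqrt (\<tau> (Suc i) - \<tau> i)))"
      using BM cell that unfolding std_BM_def D_def S_def by auto
    from normal_density_affine[OF this, of "c i" 0] show ?thesis
      using cell that by (simp add: S_def)
  qed
  ultimately have "distributed M lborel (\<lambda>\<omega>. \<Sum>i\<in>S. c i * D i \<omega>)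
      (normal_density (\<Sum>i\<in>S. 0) (sqrt (\<Sum>i\<in>S. (\<bar>c i\<bar> * sqrt (\<tau> (Suc i) - \<tau> i))\<^sup>2)))"
    using \<open>S \<noteq> {}\<close> cell by (intro sum_indep_normal) (auto simp: S_def)
  then have "distributed M lborel (\<lambda>\<omega>. \<Sum>i\<in>S. c i * D i \<omega>) (normal_density 0 (norm01 (step_fun N \<tau> c)))"
    unfolding std by simp
  moreover have "(\<lambda>\<omega>. \<Sum>i\<in>S. c i * D i \<omega>) = step_sum W N \<tau> c"
    unfolding step_sum_def D_def S_def by (intro ext sum.mono_neutral_left) auto
  ultimately show ?thesis by simp
qed

lemma abs_logistic_sub_half_ge:
  fixes z :: real
  shows "\<bar>z\<bar> / (2 * (2 + \<bar>z\<bar>)) \<le> \<bar>exp z / (1 + exp z) - 1 / 2\<bar>"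
proof -
  have nonneg_case: "u / (2 * (2 + u)) \<le> exp u / (1 + exp u) - 1 / 2" if "0 \<le> u" for u :: real
  proof -
    have "(exp u - 1) * (2 + u) - u * (1 + exp u) = 2 * (exp u - (1 + u))"
      by (simp add: algebra_simps)
    also have "\<dots> \<ge> 0"
      using exp_ge_add_one_self[of u] by (simp only: diff_ge_0_iff_ge mult_nonneg_nonneg zero_le_numeral)
    finally have "u * (1 + exp u) \<le> (exp u - 1) * (2 + u)"
      by simp
    then show ?thesis
      using that by (simp add: field_simps add_pos_pos)
  qed
  have "0 < 1 + exp z"
    by (simp add: add_pos_pos)
  then have "exp (- z) / (1 + exp (- z)) - 1 / 2 = - (exp z / (1 + exp z) - 1 / 2)"
    by (simp add: exp_minus field_simps)
  then show ?thesis
    using nonneg_case[of z] nonneg_case[of "- z"] by (cases "0 \<le> z") auto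
qed

lemma logit_bound_of_logistic_near_half:
  fixes z \<epsilon> :: real
  assumes "\<epsilon> \<le> 1 / 6" "\<bar>exp z / (1 + exp z) - 1 / 2\<bar> \<le> \<epsilon>"
  shows "\<bar>z\<bar> \<le> 6 * \<epsilon>"
proof -
  have "\<bar>z\<bar> / (2 * (2 + \<bar>z\<bar>)) \<le> \<epsilon>"
    using abs_logistic_sub_half_ge[of z] assms(2) by linarith
  then have "\<bar>z\<bar> * (1 - 2 * \<epsilon>) \<le> 4 * \<epsilon>"
    by (simp add: field_simps)
  also have "4 * \<epsilon> \<le> 6 * \<epsilon> * (1 - 2 * \<epsilon>)"
  proof -
    have "0 \<le> \<epsilon>" using assms(2) by linarith
    then have "0 \<le> \<epsilon> * (2 - 12 * \<epsilon>)" using assms(1) by simp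
    then show ?thesis by (simp add: algebra_simps)
  qed
  finally show ?thesis
    by (rule mult_right_le_imp_le) (use assms(1) in simp)
qed

lemma prob_eta_near_half_le_step:
  fixes M :: "'a measure" and Y I :: "'a \<Rightarrow> real" and W X :: "real \<Rightarrow> 'a \<Rightarrow> real"
  assumes BM: "std_BM M W"
    and [measurable]: "Y \<in> borel_measurable M" and Y01: "\<forall>\<omega>\<in>space M. Y \<omega> \<in> {0, 1}"
    and X: "X = (\<lambda>t \<omega>. Y \<omega> * (LINT s:{0..t}|lborel. f s) + (1 - Y \<omega>) * (LINT s:{0..t}|lborel. g s) + W t \<omega>)"
    and [measurable]: "I \<in> borel_measurable M"
    and partition: "partition01 N \<tau>" and "0 < \<epsilon>" "\<epsilon> \<le> 1/8"
    and \<sigma>_pos: "0 < norm01 (step_fun N \<tau> c)"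
  shows "measure M {\<omega> \<in> space M. \<bar>eta f g I \<omega> - 1/2\<bar> \<le> \<epsilon>}
    \<le> 10 * \<epsilon> / norm01 (step_fun N \<tau> c)
      + measure M {\<omega> \<in> space M. \<bar>step_sum X N \<tau> c \<omega> - I \<omega>\<bar> > \<epsilon> / 4}"
proof -
  interpret prob_space M using BM by (simp add: std_BM_def)
  define \<sigma> where "\<sigma> = norm01 (step_fun N \<tau> c)"
  define k where "k = - (norm01 f)\<^sup>2 / 2 + (norm01 g)\<^sup>2 / 2"
  define r where "r = 6 * \<epsilon> + \<epsilon> / 4"
  define A where "A = (\<Sum>i<N. c i * ((LINT s:{0..\<tau> (Suc i)}|lborel. f s) - (LINT s:{0..\<tau> i}|lborel. f s)))"
  define B where "B = (\<Sum>i<N. c i * ((LINT s:{0..\<tau> (Suc i)}|lborel. g s) - (LINT s:{0..\<tau> i}|lborel. g s)))"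
  define G where "G = step_sum W N \<tau> c"
  define near where "near m = {\<omega> \<in> space M. \<bar>G \<omega> - m\<bar> \<le> r}" for m
  define far where "far = {\<omega> \<in> space M. \<bar>step_sum X N \<tau> c \<omega> - I \<omega>\<bar> > \<epsilon> / 4}"
  have G: "distributed M lborel G (normal_density 0 \<sigma>)"
    unfolding G_def \<sigma>_def by (rule std_BM_step_sum_normal[OF BM partition \<sigma>_pos])
  then have [measurable]: "G \<in> borel_measurable M"
    using distributed_measurable[OF G] by simp
  have decomp: "step_sum X N \<tau> c = (\<lambda>\<omega>. Y \<omega> * A + (1 - Y \<omega>) * B + G \<omega>)"
    unfolding G_def step_sum_def X A_def B_def
    by (simp add: algebra_simps sum.distrib sum_distrib_left sum_subtractf)
  have events [measurable]: "near m \<in> sets M" "far \<in> sets M" for m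
    unfolding near_def far_def decomp by measurable
  have event_subset: "{\<omega> \<in> space M. \<bar>eta f g I \<omega> - 1/2\<bar> \<le> \<epsilon>} \<subseteq> near (- A - k) \<union> near (- B - k) \<union> far"
  proof
    fix \<omega>
    assume \<omega>: "\<omega> \<in> {\<omega> \<in> space M. \<bar>eta f g I \<omega> - 1/2\<bar> \<le> \<epsilon>}"
    have "eta f g I \<omega> = exp (I \<omega> + k) / (1 + exp (I \<omega> + k))"
      unfolding eta_def k_def Let_def by (simp add: algebra_simps)
    then have "\<bar>I \<omega> + k\<bar> \<le> 6 * \<epsilon>"
      using \<omega> \<open>\<epsilon> \<le> 1/8\<close> by (intro logit_bound_of_logistic_near_half) auto
    then have "\<bar>step_sum X N \<tau> c \<omega> + k\<bar> \<le> r" if "\<omega> \<notin> far"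
      using that \<omega> abs_triangle_ineq[of "step_sum X N \<tau> c \<omega> - I \<omega>" "I \<omega> + k"]
      unfolding far_def r_def by auto
    moreover have "step_sum X N \<tau> c \<omega> = A + G \<omega> \<or> step_sum X N \<tau> c \<omega> = B + G \<omega>"
      using Y01 \<omega> by (auto simp: decomp)
    ultimately show "\<omega> \<in> near (- A - k) \<union> near (- B - k) \<union> far"
      using \<omega> by (auto simp: near_def algebra_simps)
  qed
  have near_le: "measure M (near m) \<le> 5 * \<epsilon> / \<sigma>" for m
  proof -
    have "measure M (near m) \<le> 2 * r / (\<sigma> * sqrt (2 * pi))"
      unfolding near_def using \<sigma>_pos \<open>0 < \<epsilon>\<close>
      by (intro prob_normal_near_le[OF prob_space_axioms G]) (simp_all add: \<sigma>_def r_def)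
    also have "\<dots> \<le> 2 * r / (\<sigma> * (5 / 2))"
    proof -
      have "(5 / 2) ^ 2 \<le> (sqrt (2 * pi)) ^ 2"
        using pi_approx(1) by (simp add: power2_eq_square)
      then have "5 / 2 \<le> sqrt (2 * pi)"
        by (rule power2_le_imp_le) simp
      then show ?thesis
        using \<sigma>_pos \<open>0 < \<epsilon>\<close> by (intro divide_left_mono mult_left_mono) (auto simp: \<sigma>_def r_def)
    qed
    also have "\<dots> = 5 * \<epsilon> / \<sigma>"
      by (simp add: r_def field_simps)
    finally show ?thesis .
  qed
  have "measure M {\<omega> \<in> space M. \<bar>eta f g I \<omega> - 1/2\<bar> \<le> \<epsilon>}
      \<le> measure M (near (- A - k) \<union> near (- B - k) \<union> far)"
    by (intro finite_measure_mono event_subset sets.Un events)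
  also have "\<dots> \<le> measure M (near (- A - k)) + measure M (near (- B - k)) + measure M far"
    using measure_Un_le[of "near (- A - k)" M "near (- B - k)"]
      measure_Un_le[of "near (- A - k) \<union> near (- B - k)" M far] by (simp add: events)
  also have "\<dots> \<le> 10 * \<epsilon> / \<sigma> + measure M far"
    using near_le[of "- A - k"] near_le[of "- B - k"] by simp
  finally show ?thesis
    unfolding \<sigma>_def far_def .
qed

lemma stoch_integral_step_approx:
  assumes "stoch_integral M X h I" "sq_integrable01 h"
  obtains Ns \<tau>s cs where "\<And>n. partition01 (Ns n) (\<tau>s n)"
    and "(\<lambda>n. norm01 (step_fun (Ns n) (\<tau>s n) (cs n))) \<longlonglongrightarrow> norm01 h"
    and "\<And>e. 0 < e \<Longrightarrow>
      (\<lambda>n. measure M {\<omega> \<in> space M. \<bar>step_sum X (Ns n) (\<tau>s n) (cs n) \<omega> - I \<omega>\<bar> > e}) \<longlonglongrightarrow> 0"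
proof -
  obtain Ns \<tau>s cs where partition: "\<And>n. partition01 (Ns n) (\<tau>s n)"
    and L2: "(\<lambda>n. LINT t:{0..1}|lborel. (step_fun (Ns n) (\<tau>s n) (cs n) t - h t)\<^sup>2) \<longlonglongrightarrow> 0"
    and prob: "\<And>e. 0 < e \<Longrightarrow>
      (\<lambda>n. measure M {\<omega> \<in> space M. \<bar>step_sum X (Ns n) (\<tau>s n) (cs n) \<omega> - I \<omega>\<bar> > e}) \<longlonglongrightarrow> 0"
    using assms(1) unfolding stoch_integral_def by blast
  have "(\<lambda>n. norm01 (step_fun (Ns n) (\<tau>s n) (cs n)) - norm01 h) \<longlonglongrightarrow> 0"
  proof (rule Lim_null_comparison)
    show "\<forall>\<^sub>F n in sequentially. norm (norm01 (step_fun (Ns n) (\<tau>s n) (cs n)) - norm01 h)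
        \<le> norm01 (\<lambda>t. step_fun (Ns n) (\<tau>s n) (cs n) t - h t)"
      using norm01_diff_abs_le[OF sq_integrable01_step_fun[OF partition] assms(2)] by simp
    show "(\<lambda>n. norm01 (\<lambda>t. step_fun (Ns n) (\<tau>s n) (cs n) t - h t)) \<longlonglongrightarrow> 0"
      unfolding norm01_def using tendsto_real_sqrt[OF L2] by simp
  qed
  then have "(\<lambda>n. norm01 (step_fun (Ns n) (\<tau>s n) (cs n))) \<longlonglongrightarrow> norm01 h"
    by (rule LIM_zero_cancel)
  from partition this prob show thesis
    by (rule that)
qed

theorem proposition1:
  fixes M :: "'a measure" and Y :: "'a \<Rightarrow> real" and W :: "real \<Rightarrow> 'a \<Rightarrow> real"
    and f g :: "real \<Rightarrow> real" and X :: "real \<Rightarrow> 'a \<Rightarrow> real" and I :: "'a \<Rightarrow> real"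
    and \<epsilon> :: real
  assumes "prob_space M"
    and "sq_integrable01 f" and "sq_integrable01 g"
    and "std_BM M W"
    and "Y \<in> borel_measurable M" and "\<forall>\<omega>\<in>space M. Y \<omega> \<in> {0, 1}"
    and "measure M {\<omega> \<in> space M. Y \<omega> = 1} = 1/2"
    and "indep_rv_process M Y W"
    and "X = (\<lambda>t \<omega>. Y \<omega> * (LINT s:{0..t}|lborel. f s) + (1 - Y \<omega>) * (LINT s:{0..t}|lborel. g s) + W t \<omega>)"
    and "stoch_integral M X (\<lambda>t. f t - g t) I"
    and "0 < \<epsilon>" and "\<epsilon> \<le> 1/8"
  shows "measure M {\<omega> \<in> space M. \<bar>eta f g I \<omega> - 1/2\<bar> \<le> \<epsilon>}
           \<le> (if norm01 (\<lambda>t. f t - g t) = 0 then 1 else min 1 (10 * \<epsilon> / norm01 (\<lambda>t. f t - g t)))"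
proof -
  interpret prob_space M by fact
  define \<Delta> where "\<Delta> = norm01 (\<lambda>t. f t - g t)"
  let ?P = "measure M {\<omega> \<in> space M. \<bar>eta f g I \<omega> - 1/2\<bar> \<le> \<epsilon>}"
  have "?P \<le> 10 * \<epsilon> / \<Delta>" if "0 < \<Delta>"
  proof -
    obtain Ns \<tau>s cs where partition: "\<And>n. partition01 (Ns n) (\<tau>s n)"
      and \<sigma>: "(\<lambda>n. norm01 (step_fun (Ns n) (\<tau>s n) (cs n))) \<longlonglongrightarrow> \<Delta>"
      and prob: "\<And>e. 0 < e \<Longrightarrow>
        (\<lambda>n. measure M {\<omega> \<in> space M. \<bar>step_sum X (Ns n) (\<tau>s n) (cs n) \<omega> - I \<omega>\<bar> > e}) \<longlonglongrightarrow> 0"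
      using stoch_integral_step_approx[OF assms(10) sq_integrable01_diff[OF assms(2,3)]]
      unfolding \<Delta>_def by blast
    have "I \<in> borel_measurable M"
      using assms(10) by (simp add: stoch_integral_def)
    then have bound: "\<forall>\<^sub>F n in sequentially. ?P \<le> 10 * \<epsilon> / norm01 (step_fun (Ns n) (\<tau>s n) (cs n))
        + measure M {\<omega> \<in> space M. \<bar>step_sum X (Ns n) (\<tau>s n) (cs n) \<omega> - I \<omega>\<bar> > \<epsilon> / 4}"
      using order_tendstoD(1)[OF \<sigma> that] prob_eta_near_half_le_step[OF assms(4,5,6,9)] partition assms(11,12)
      by (auto elim: eventually_mono)
    have limit: "(\<lambda>n. 10 * \<epsilon> / norm01 (step_fun (Ns n) (\<tau>s n) (cs n))
        + measure M {\<omega> \<in> space M. \<bar>step_sum X (Ns n) (\<tau>s n) (cs n) \<omega> - I \<omega>\<bar> > \<epsilon> / 4})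
        \<longlonglongrightarrow> 10 * \<epsilon> / \<Delta> + 0"
      using that assms(11) by (intro tendsto_intros \<sigma> prob) auto
    show ?thesis
      using tendsto_le[OF trivial_limit_sequentially limit tendsto_const bound] by simp
  qed
  moreover have "?P \<le> 1" "0 \<le> \<Delta>"
    by (simp_all add: \<Delta>_def norm01_nonneg)
  ultimately show ?thesis
    unfolding \<Delta>_def[symmetric] by auto
qed

end
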